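(* For every integer $k\ge 1$, let $P_k=(p_{ij})$ be the $2^k\times 2^k$ matrix with $p_{ij}=1$ if there is $n\in\{1,\dots,2^k\}$ with $i=\sigma^{-1}_{2^k}(n+1)$ and $j=\sigma^{-1}_{2^k}(n)$ (with the convention $\sigma^{-1}_{2^k}(2^k+1)=\sigma^{-1}_{2^k}(1)$), and $p_{ij}=0$ otherwise. Then $P_k=A_{2^k}$ for every $k\ge 1$.
   Context: For every integer $k\ge 0$ the map $\sigma^{-1}_{2^k}:\{1,\dots,2^k\}\to\{1,\dots,2^k\}$ is defined recursively by $\sigma^{-1}_{2^0}(1)=1$ and, for $k\ge 1$ and $1\le n\le 2^{k-1}$, $\sigma^{-1}_{2^k}(2n-1)=\sigma^{-1}_{2^{k-1}}(n)$ and $\sigma^{-1}_{2^k}(2n)=2^k+1-\sigma^{-1}_{2^{k-1}}(n)$; it is a permutation of $\{1,\dots,2^k\}$ (the inverse of the permutation encoding the ordering of the superstable $2^k$-periodic orbit of a period-doubling cascade of a unimodal map). For $r\ge 1$, $I_r$ denotes the $r\times r$ identity matrix and $I^*_r=(a_{ij})$ the $r\times r$ matrix with $a_{ij}=1$ if $i+j=r+1$ and $a_{ij}=0$ otherwise. The matrices $A_{2^k}$ are defined by $$A_{2}=\begin{pmatrix}0&1\\1&0\end{pmatrix},\quad A_{4}=\begin{pmatrix}0&0&1&0\\0&0&0&1\\0&1&0&0\\1&0&0&0\end{pmatrix},\quad A_{2^k}=\begin{pmatrix}0 & A_{2^{k-2}} & 0\\ 0&0&I_{2^{k-2}}\\ I^*_{2^{k-1}}&0&0\end{pmatrix}\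 (k\ge 3),$$ where in the last block matrix the row blocks have sizes $2^{k-2},2^{k-2},2^{k-1}$ and the column blocks have sizes $2^{k-1},2^{k-2},2^{k-2}$, and $0$ denotes zero blocks. *)

theory Defs
  imports Main
begin

text \<open>Matrices are represented as functions of 1-based row/column indices;
  only indices in the range 1..2^k are meaningful.\<close>

text \<open>sigma_inv k m  is the permutation sigma^{-1}_{2^k} applied to m (1 <= m <= 2^k).\<close>
fun sigma_inv :: "nat \<Rightarrow> nat \<Rightarrow> nat" where
  "sigma_inv 0 m = 1"
| "sigma_inv (Suc k) m =
     (if odd m then sigma_inv k ((m + 1) div 2)
      else 2 ^ Suc k + 1 - sigma_inv k (m div 2))"

definition sigma_inv_cyc :: "nat \<Rightarrow> nat \<Rightarrow> nat" where
  "sigma_inv_cyc k m = (if m = 2 ^ k + 1 then sigma_inv k 1 else sigma_inv k m)"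

definition Pmat :: "nat \<Rightarrow> nat \<Rightarrow> nat \<Rightarrow> int" where
  "Pmat k i j = (if \<exists>n\<in>{1..2 ^ k}. i = sigma_inv_cyc k (n + 1) \<and> j = sigma_inv k n
                 then 1 else 0)"

text \<open>The matrices A_{2^k}, k >= 1, via the block recursion
  (row blocks of sizes 2^(k-2), 2^(k-2), 2^(k-1);
   column blocks of sizes 2^(k-1), 2^(k-2), 2^(k-2)).\<close>
fun Amat :: "nat \<Rightarrow> nat \<Rightarrow> nat \<Rightarrow> int" where
  "Amat 0 i j = (if i = 1 \<and> j = 1 then 1 else 0)"
| "Amat (Suc 0) i j = (if (i = 1 \<and> j = 2) \<or> (i = 2 \<and> j = 1) then 1 else 0)"
| "Amat (Suc (Suc 0)) i j =
     (if (i = 1 \<and> j = 3) \<or> (i = 2 \<and> j = 4) \<or> (i = 3 \<and> j = 2) \<or> (i = 4 \<and> j = 1)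
      then 1 else 0)"
| "Amat (Suc (Suc (Suc k))) i j =
     (let q = 2 ^ Suc k; h = 2 ^ Suc (Suc k); N = 2 ^ Suc (Suc (Suc k)) in
      if 1 \<le> i \<and> i \<le> q \<and> h + 1 \<le> j \<and> j \<le> h + q then Amat (Suc k) i (j - h)
      else if q + 1 \<le> i \<and> i \<le> 2 * q \<and> h + q + 1 \<le> j \<and> j \<le> N then
        (if j - (h + q) = i - q then 1 else 0)
      else if h + 1 \<le> i \<and> i \<le> N \<and> 1 \<le> j \<and> j \<le> h then
        (if (i - h) + j = h + 1 then 1 else 0)
      else 0)"

end

theory Submission
  imports Defs
begin

text \<open>Both matrices are permutation matrices of one map.  \<open>P_k\<close> has its 1 in
  column \<open>\<sigma>\<inverse>(n)\<close> at row \<open>\<sigma>\<inverse>(n+1)\<close>, so it is the matrix of the cyclic successor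
  \<open>j \<mapsto> \<sigma>\<inverse>(\<sigma>(j) + 1)\<close>, called \<open>sigma_succ\<close> below.  The recursion for \<open>\<sigma>\<inverse>\<close>
  shows that on \<open>{1..2^(k+1)}\<close> this successor sends the lower half \<open>j \<le> 2^k\<close> to
  \<open>2^(k+1) + 1 - j\<close> and acts on the upper half as that reflection followed by the
  successor of level \<open>k\<close>.  Unfolding this twice gives exactly the blocks \<open>I*\<close>,
  \<open>A_(2^(k-2))\<close> and \<open>I\<close> of the recursion defining \<open>A_(2^k)\<close>.\<close>

fun sigma_succ :: "nat \<Rightarrow> nat \<Rightarrow> nat" where
  "sigma_succ 0 j = 1"
| "sigma_succ (Suc k) j =
     (if j \<le> 2 ^ k then 2 ^ Suc k + 1 - j else sigma_succ k (2 ^ Suc k + 1 - j))"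

lemma sigma_inv_bounds: "1 \<le> sigma_inv k m \<and> sigma_inv k m \<le> 2 ^ k"
proof (induction k arbitrary: m)
  case (Suc k)
  have "1 \<le> sigma_inv k ((m + 1) div 2) \<and> sigma_inv k ((m + 1) div 2) \<le> 2 ^ k"
    and "1 \<le> sigma_inv k (m div 2) \<and> sigma_inv k (m div 2) \<le> 2 ^ k"
    using Suc.IH by auto
  then show ?case by auto
qed simp

lemma sigma_succ_bounds:
  "1 \<le> j \<Longrightarrow> j \<le> 2 ^ k \<Longrightarrow> 1 \<le> sigma_succ k j \<and> sigma_succ k j \<le> 2 ^ k"
proof (induction k arbitrary: j)
  case (Suc k)
  show ?case
  proof (cases "j \<le> 2 ^ k")
    case False
    then have "1 \<le> 2 ^ Suc k + 1 - j" "2 ^ Suc k + 1 - j \<le> 2 ^ k"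
      using Suc.prems by auto
    from Suc.IH[OF this] False show ?thesis by auto
  qed (use Suc.prems in auto)
qed simp

lemma image_sigma_inv: "sigma_inv k ` {1..2 ^ k} = {1..2 ^ k}"
proof
  show "sigma_inv k ` {1..2 ^ k} \<subseteq> {1..2 ^ k}"
    using sigma_inv_bounds by auto
  show "{1..2 ^ k} \<subseteq> sigma_inv k ` {1..2 ^ k}"
  proof (induction k)
    case (Suc k)
    show ?case
    proof
      fix j :: nat assume j: "j \<in> {1..2 ^ Suc k}"
      show "j \<in> sigma_inv (Suc k) ` {1..2 ^ Suc k}"
      proof (cases "j \<le> 2 ^ k")
        case True
        with j have "j \<in> {1..2 ^ k}" by simp
        from subsetD[OF Suc.IH this] obtain n where n: "j = sigma_inv k n" "n \<in> {1..2 ^ k}"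
          by (rule imageE)
        then have "sigma_inv (Suc k) (2 * n - 1) = j"
          by (auto simp: odd_pos)
        with n show ?thesis by (intro image_eqI[of _ _ "2 * n - 1"]) auto
      next
        case False
        with j have "2 ^ Suc k + 1 - j \<in> {1..2 ^ k}" by auto
        from subsetD[OF Suc.IH this] obtain n where n: "2 ^ Suc k + 1 - j = sigma_inv k n" "n \<in> {1..2 ^ k}"
          by (rule imageE)
        then have "sigma_inv (Suc k) (2 * n) = j"
          using j by auto
        with n show ?thesis by (intro image_eqI[of _ _ "2 * n"]) auto
      qed
    qed
  qed simp
qed

lemma sigma_succ_sigma_inv:
  "1 \<le> m \<Longrightarrow> m \<le> 2 ^ k \<Longrightarrow> sigma_succ k (sigma_inv k m) = sigma_inv_cyc k (m + 1)"
proof (induction k arbitrary: m)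
  case 0
  then show ?case by (simp add: sigma_inv_cyc_def)
next
  case (Suc k)
  show ?case
  proof (cases "odd m")
    case True
    define a where "a = sigma_inv k ((m + 1) div 2)"
    have "1 \<le> a \<and> a \<le> 2 ^ k"
      using sigma_inv_bounds a_def by auto
    moreover have "sigma_inv (Suc k) m = a" "sigma_inv (Suc k) (m + 1) = 2 ^ Suc k + 1 - a"
      using True a_def by simp_all
    moreover have "m + 1 \<noteq> 2 ^ Suc k + 1"
      using True by auto
    ultimately show ?thesis by (simp add: sigma_inv_cyc_def)
  next
    case False
    then obtain n where n: "m = 2 * n" by blast
    with Suc.prems have n_bounds: "1 \<le> n" "n \<le> 2 ^ k" by auto
    have "1 \<le> sigma_inv k n \<and> sigma_inv k n \<le> 2 ^ k"
      using sigma_inv_bounds by auto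
    then have "sigma_succ (Suc k) (sigma_inv (Suc k) m) = sigma_succ k (sigma_inv k n)"
      using n by auto
    also have "\<dots> = sigma_inv_cyc k (n + 1)"
      using Suc.IH[OF n_bounds] .
    also have "\<dots> = sigma_inv_cyc (Suc k) (m + 1)"
    proof (cases "n = 2 ^ k")
      case False
      then have "m + 1 \<noteq> 2 ^ Suc k + 1" "n + 1 \<noteq> 2 ^ k + 1"
        using n by auto
      moreover have "sigma_inv (Suc k) (m + 1) = sigma_inv k (n + 1)"
        using n by simp
      ultimately show ?thesis by (simp add: sigma_inv_cyc_def)
    qed (use n in \<open>simp add: sigma_inv_cyc_def\<close>)
    finally show ?thesis .
  qed
qed

lemma Pmat_eq_sigma_succ:
  assumes "1 \<le> j" "j \<le> 2 ^ k"
  shows "Pmat k i j = (if i = sigma_succ k j then 1 else 0)"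
proof -
  have "(\<exists>n\<in>{1..2 ^ k}. i = sigma_inv_cyc k (n + 1) \<and> j = sigma_inv k n) \<longleftrightarrow>
        (\<exists>n\<in>{1..2 ^ k}. i = sigma_succ k j \<and> j = sigma_inv k n)"
    using sigma_succ_sigma_inv by auto
  also have "\<dots> \<longleftrightarrow> i = sigma_succ k j"
    using image_sigma_inv[of k] assms by (auto simp: image_iff)
  finally show ?thesis by (simp add: Pmat_def)
qed

lemma sigma_succ_blocks:
  assumes "q = 2 ^ k" "j \<le> 4 * q"
  shows "sigma_succ (Suc (Suc k)) j =
    (if j \<le> 2 * q then 4 * q + 1 - j
     else if j \<le> 3 * q then sigma_succ k (j - 2 * q)
     else j - 2 * q)"
proof (cases "j \<le> 2 * q")
  case False
  have "sigma_succ (Suc (Suc k)) j = sigma_succ (Suc k) (4 * q + 1 - j)"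
    using False assms(1) by simp
  also have "\<dots> = (if j \<le> 3 * q then sigma_succ k (j - 2 * q) else j - 2 * q)"
  proof -
    define x where "x = 4 * q + 1 - j"
    have "x \<le> q \<longleftrightarrow> \<not> j \<le> 3 * q" "2 * q + 1 - x = j - 2 * q"
      using False assms(2) x_def by auto
    moreover have "sigma_succ (Suc k) x = (if x \<le> q then 2 * q + 1 - x else sigma_succ k (2 * q + 1 - x))"
      using assms(1) by simp
    ultimately show ?thesis
      unfolding x_def[symmetric] by (simp del: sigma_succ.simps)
  qed
  finally show ?thesis using False by simp
qed (use assms(1) in simp)

lemma Amat_blocks:
  assumes "q = 2 ^ Suc k"
  shows "Amat (Suc (Suc (Suc k))) i j =
    (if 1 \<le> i \<and> i \<le> q \<and> 2 * q + 1 \<le> j \<and> j \<le> 3 * q then Amat (Suc k) i (j - 2 * q)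
     else if q + 1 \<le> i \<and> i \<le> 2 * q \<and> 3 * q + 1 \<le> j \<and> j \<le> 4 * q then
       (if j - 3 * q = i - q then 1 else 0)
     else if 2 * q + 1 \<le> i \<and> i \<le> 4 * q \<and> 1 \<le> j \<and> j \<le> 2 * q then
       (if (i - 2 * q) + j = 2 * q + 1 then 1 else 0)
     else 0)"
proof -
  have powers: "(2::nat) ^ Suc (Suc k) = 2 * q" "(2::nat) ^ Suc (Suc (Suc k)) = 4 * q"
    and "2 * q + q = 3 * q"
    using assms by simp_all
  then show ?thesis
    by (simp only: Amat.simps(4) Let_def powers assms[symmetric])
qed

lemma Amat_eq_sigma_succ:
  "1 \<le> k \<Longrightarrow> 1 \<le> i \<Longrightarrow> i \<le> 2 ^ k \<Longrightarrow> 1 \<le> j \<Longrightarrow> j \<le> 2 ^ k \<Longrightarrow>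
   Amat k i j = (if i = sigma_succ k j then 1 else 0)"
proof (induction k i j rule: Amat.induct)
  case (1 i j)
  then show ?case by simp
next
  case (2 i j)
  then have "i = 1 \<or> i = 2" "j = 1 \<or> j = 2" by auto
  then show ?case by (elim disjE; simp)
next
  case (3 i j)
  then have "i = 1 \<or> i = 2 \<or> i = 3 \<or> i = 4" "j = 1 \<or> j = 2 \<or> j = 3 \<or> j = 4" by auto
  then show ?case by (elim disjE; simp)
next
  case (4 k i j)
  define q where "q = (2::nat) ^ Suc k"
  have powers: "(2::nat) ^ Suc (Suc k) = 2 * q" "(2::nat) ^ Suc (Suc (Suc k)) = 4 * q"
    by (simp_all add: q_def)
  note A = Amat_blocks[OF q_def, of i j]
  have ij: "1 \<le> i" "i \<le> 4 * q" "1 \<le> j" "j \<le> 4 * q"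
    using "4.prems" powers by auto
  note succ = sigma_succ_blocks[OF q_def ij(4)]
  consider "j \<le> 2 * q" | "2 * q < j" "j \<le> 3 * q" | "3 * q < j" by linarith
  then show ?case
  proof cases
    case 1
    with A succ ij show ?thesis by (auto simp del: Amat.simps sigma_succ.simps)
  next
    case 2
    then have j': "1 \<le> j - 2 * q" "j - 2 * q \<le> 2 ^ Suc k"
      by (auto simp: q_def)
    show ?thesis
    proof (cases "i \<le> q")
      case True
      then have "Amat (Suc k) i (j - 2 * q) = (if i = sigma_succ (Suc k) (j - 2 * q) then 1 else 0)"
        using "4.IH"[OF refl refl refl] 2 ij j' unfolding powers(1) q_def[symmetric]
        by (simp del: sigma_succ.simps)
      moreover have "Amat (Suc (Suc (Suc k))) i j = Amat (Suc k) i (j - 2 * q)"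
        using A True 2 ij by (simp del: Amat.simps)
      moreover have "sigma_succ (Suc (Suc (Suc k))) j = sigma_succ (Suc k) (j - 2 * q)"
        using succ 2 by (simp del: sigma_succ.simps)
      ultimately show ?thesis by simp
    next
      case False
      have "sigma_succ (Suc k) (j - 2 * q) \<le> q"
        using sigma_succ_bounds[OF j'] q_def by auto
      with A succ False 2 ij show ?thesis by (auto simp del: Amat.simps sigma_succ.simps)
    qed
  next
    case 3
    have "Amat (Suc (Suc (Suc k))) i j = (if q + 1 \<le> i \<and> i \<le> 2 * q then
        (if j - 3 * q = i - q then 1 else 0) else 0)"
      using A 3 ij by (simp del: Amat.simps)
    moreover have "sigma_succ (Suc (Suc (Suc k))) j = j - 2 * q"
      using succ 3 by (simp del: sigma_succ.simps)
    ultimately show ?thesis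
      using 3 ij by (auto simp del: Amat.simps sigma_succ.simps)
  qed
qed

theorem theorem2:
  fixes k :: nat
  assumes "k \<ge> 1"
  shows "\<forall>i\<in>{1..2 ^ k}. \<forall>j\<in>{1..2 ^ k}. Pmat k i j = Amat k i j"
proof (intro ballI)
  fix i j :: nat assume "i \<in> {1..2 ^ k}" "j \<in> {1..2 ^ k}"
  then show "Pmat k i j = Amat k i j"
    using Pmat_eq_sigma_succ[of j k i] Amat_eq_sigma_succ[of k i j] assms by simp
qed

end
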